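(* Let $\mathcal H$ be the set of pairs $(g,h)$ of Markov policies $g,h:\mathcal X\to\{0,1\}$ such that $N^{(g)}(x)\ge N^{(h)}(x)$ for all $x\in\mathcal X$. Each of the following conditions is sufficient for the RB to be indexable: (a) for every $(g,h)\in\mathcal H$ and every $x,z\in\mathcal X$, \[\sum_{y\in\mathcal X}\Big\{[\beta P_{zy}(1)-P_{xy}(1)]^+N^{(g)}(y)-[P_{xy}(1)-\beta P_{zy}(1)]^+N^{(h)}(y)\Big\}\le\frac{(1-\beta)^2}{\beta};\] (b) for every $(g,h)\in\mathcal H$ and every $x\in\mathcal X$, \[\sum_{y\in\mathcal X}\Big\{[P_{xy}(0)-P_{xy}(1)]^+N^{(g)}(y)-[P_{xy}(1)-P_{xy}(0)]^+N^{(h)}(y)\Big\}\le\frac{1-\beta}{\beta}.\]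
   Context: A restless bandit (RB) consists of a finite or countable state space $\mathcal X$, actions $\{0,1\}$ (0 = passive, 1 = active), transition matrices $P(0),P(1)$ on $\mathcal X$, and a cost function $c:\mathcal X\times\{0,1\}\to\mathbb R$; $\beta\in(0,1)$ is a discount factor. $[u]^+=\max\{u,0\}$. For $\lambda\in\mathbb R$ let $c_\lambda(x,a)=c(x,a)+\lambda a$. For a Markov policy $g:\mathcal X\to\{0,1\}$ (with $X_{t+1}$ drawn from $P_{X_t\,\cdot}(g(X_t))$) let $N^{(g)}(x)=(1-\beta)\mathbb E[\sum_{t\ge0}\beta^t g(X_t)\mid X_0=x]$. Let $V_\lambda$ be the unique fixed point of $V_\lambda(x)=\min\{H_\lambda(x,0),H_\lambda(x,1)\}$, $H_\lambda(x,a)=(1-\beta)c_\lambda(x,a)+\beta\sum_y P_{xy}(a)V_\lambda(y)$, and $g_\lambda(x)=0$ if $H_\lambda(x,0)<H_\lambda(x,1)$, $g_\lambda(x)=1$ otherwise. The passive set is $\Pi_\lambda=\{x: g_\lambda(x)=0\}$. The RB is indexable if $\lambda'\le\lambda''$ implies $\Pi_{\lambda'}\subseteq\Pi_{\lambda''}$. *)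

theory Defs
  imports "HOL-Probability.Probability"
begin

text \<open>Actions are encoded as bool (False = passive = 0, True = active = 1).
  The transition kernel is P :: bool => 'x => 'x pmf, so that the matrix entry P_{xy}(a)
  is pmf (P a x) y (rows are automatically probability distributions).\<close>

fun state_dist :: "(bool \<Rightarrow> 'x \<Rightarrow> 'x pmf) \<Rightarrow> ('x \<Rightarrow> bool) \<Rightarrow> nat \<Rightarrow> 'x \<Rightarrow> 'x pmf" where
  "state_dist P g 0 x = return_pmf x"
| "state_dist P g (Suc t) x = bind_pmf (state_dist P g t x) (\<lambda>z. P (g z) z)"

definition occ :: "real \<Rightarrow> (bool \<Rightarrow> 'x \<Rightarrow> 'x pmf) \<Rightarrow> ('x \<Rightarrow> bool) \<Rightarrow> 'x \<Rightarrow> real" where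
  "occ \<beta> P g x = (1 - \<beta>) *
     (\<Sum>t. \<beta> ^ t * measure_pmf.expectation (state_dist P g t x) (\<lambda>y. of_bool (g y)))"

definition clam :: "('x \<Rightarrow> bool \<Rightarrow> real) \<Rightarrow> real \<Rightarrow> 'x \<Rightarrow> bool \<Rightarrow> real" where
  "clam c lam x a = c x a + lam * of_bool a"

definition Hq :: "real \<Rightarrow> (bool \<Rightarrow> 'x \<Rightarrow> 'x pmf) \<Rightarrow> ('x \<Rightarrow> bool \<Rightarrow> real) \<Rightarrow> real
                  \<Rightarrow> ('x \<Rightarrow> real) \<Rightarrow> 'x \<Rightarrow> bool \<Rightarrow> real" where
  "Hq \<beta> P c lam V x a = (1 - \<beta>) * clam c lam x a + \<beta> * infsum (\<lambda>y. pmf (P a x) y * V y) UNIV"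

definition Vlam :: "real \<Rightarrow> (bool \<Rightarrow> 'x \<Rightarrow> 'x pmf) \<Rightarrow> ('x \<Rightarrow> bool \<Rightarrow> real) \<Rightarrow> real \<Rightarrow> 'x \<Rightarrow> real" where
  "Vlam \<beta> P c lam = (THE V. bounded (range V) \<and>
      (\<forall>x. V x = min (Hq \<beta> P c lam V x False) (Hq \<beta> P c lam V x True)))"

definition passive_set :: "real \<Rightarrow> (bool \<Rightarrow> 'x \<Rightarrow> 'x pmf) \<Rightarrow> ('x \<Rightarrow> bool \<Rightarrow> real) \<Rightarrow> real \<Rightarrow> 'x set" where
  "passive_set \<beta> P c lam =
     {x. Hq \<beta> P c lam (Vlam \<beta> P c lam) x False < Hq \<beta> P c lam (Vlam \<beta> P c lam) x True}"

definition indexable :: "real \<Rightarrow> (bool \<Rightarrow> 'x \<Rightarrow> 'x pmf) \<Rightarrow> ('x \<Rightarrow> bool \<Rightarrow> real) \<Rightarrow> bool" where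
  "indexable \<beta> P c \<longleftrightarrow>
     (\<forall>l1 l2. l1 \<le> l2 \<longrightarrow> passive_set \<beta> P c l1 \<subseteq> passive_set \<beta> P c l2)"

definition pos_part :: "real \<Rightarrow> real" where
  "pos_part u = max u 0"

end

theory Submission
  imports Defs
begin

(* Fix l1 < l2, let d = l2 - l1, D = V_l2 - V_l1, and let g1, g2 be the optimal policies at
   l1, l2. Comparing the Bellman equations of V_l1 and V_l2 along g1 and along g2 gives the
   discounted subsolution inequalities d N^(g2) <= D <= d N^(g1); in particular (g1, g2) is in H.
   Hence for any signed weights u, sum_y u(y) D(y) <= d sum_y ([u]^+ N^(g1) - [-u]^+ N^(g2)).
   Under (b), with u = P_x.(0) - P_x.(1), this says the advantage H(x,1) - H(x,0) of passivity
   does not decrease from l1 to l2. Under (a), with u = beta P_z.(1) - P_x.(1), it gives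
   beta A(z) <= A(x) for A(y) = (1 - beta) d + beta sum_y' P_yy'(1) D(y'); splitting states by
   the action of g1 then bounds beta sup D by A(x), whereas a state x passive at l1 but active
   at l2 would satisfy A(x) < D(x) <= beta sup D. *)

lemma bounded_contraction_has_unique_fixpoint:
  fixes T :: "('a \<Rightarrow> real) \<Rightarrow> 'a \<Rightarrow> real"
  assumes "k < 1"
    and T_bounded: "\<And>V. bounded (range V) \<Longrightarrow> bounded (range (T V))"
    and T_contraction: "\<And>V W B x. bounded (range V) \<Longrightarrow> bounded (range W) \<Longrightarrow>
           (\<And>y. dist (V y) (W y) \<le> B) \<Longrightarrow> dist (T V x) (T W x) \<le> k * B"
  shows "\<exists>!V. bounded (range V) \<and> T V = V"
proof -
  \<comment> \<open>Banach's theorem in the complete space of bounded functions with the sup distance.\<close>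
  interpret F: Metric_space "Met_TC.fspace UNIV" "Met_TC.fdist UNIV"
    by (rule Met_TC.Metric_space_funspace)
  have space: "Met_TC.fspace UNIV = {V :: 'a \<Rightarrow> real. bounded (range V)}"
    by (auto simp: Met_TC.fspace_def)
  have dist_le: "dist (V y) (W y) \<le> Met_TC.fdist UNIV V W"
    if "V \<in> Met_TC.fspace UNIV" "W \<in> Met_TC.fspace UNIV" for V W :: "'a \<Rightarrow> real" and y
    using Met_TC.funspace_mdist_le[OF that, of "Met_TC.fdist UNIV V W"] by simp
  have maps: "T \<in> Met_TC.fspace UNIV \<rightarrow> Met_TC.fspace UNIV"
    using T_bounded by (auto simp: space)
  have contr: "Met_TC.fdist UNIV (T V) (T W) \<le> k * Met_TC.fdist UNIV V W"
    if "V \<in> Met_TC.fspace UNIV" "W \<in> Met_TC.fspace UNIV" for V W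
    using that maps T_contraction[OF _ _ dist_le[OF that]]
    by (subst Met_TC.funspace_mdist_le) (auto simp: space)
  have "Metric_space.mcomplete (Met_TC.fspace UNIV) (Met_TC.fdist UNIV :: ('a \<Rightarrow> real) \<Rightarrow> _)"
    using Met_TC.mcomplete_funspace[of UNIV] complete_UNIV by (simp add: mcomplete_of_def)
  moreover have "(\<lambda>_. 0 :: real) \<in> Met_TC.fspace (UNIV :: 'a set)"
    unfolding space by simp
  ultimately obtain V where V: "V \<in> Met_TC.fspace UNIV" "T V = V"
    using F.Banach_fixedpoint_thm[OF _ _ maps \<open>k < 1\<close> contr] by (metis empty_iff)
  have unique: "W = V" if "W \<in> Met_TC.fspace UNIV" "T W = W" for W
    by (rule F.contraction_imp_unique_fixpoint[OF that(2) V(2) maps \<open>k < 1\<close> contr that(1) V(1)])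
  show ?thesis
  proof (rule ex1I[of _ V])
    show "bounded (range V) \<and> T V = V"
      using V by (simp add: space)
  next
    fix W assume "bounded (range W) \<and> T W = W"
    then show "W = V"
      using unique by (simp add: space)
  qed
qed

lemma summable_on_pmf: "pmf p summable_on A"
proof -
  have "Infinite_Sum.abs_summable_on (pmf p) A"
    using abs_summable_equivalent pmf_abs_summable by blast
  then show ?thesis
    by (rule abs_summable_summable)
qed

lemma summable_on_mult_bounded:
  fixes u f :: "'a \<Rightarrow> real"
  assumes "u summable_on A" "bounded (f ` A)"
  shows "(\<lambda>y. u y * f y) summable_on A"
proof -
  obtain B where B: "\<And>y. y \<in> A \<Longrightarrow> \<bar>f y\<bar> \<le> B"
    using assms(2) unfolding bounded_iff by auto
  have "Infinite_Sum.abs_summable_on (\<lambda>y. B * u y) A"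
    using summable_on_cmult_right[OF assms(1)] by (rule summable_on_iff_abs_summable_on_real[THEN iffD1])
  then have "Infinite_Sum.abs_summable_on (\<lambda>y. u y * f y) A"
  proof (rule Infinite_Sum.abs_summable_on_comparison_test)
    fix y assume "y \<in> A"
    then have "\<bar>f y\<bar> \<le> \<bar>B\<bar>"
      using B by fastforce
    then have "\<bar>u y\<bar> * \<bar>f y\<bar> \<le> \<bar>u y\<bar> * \<bar>B\<bar>"
      by (rule mult_left_mono) simp
    then show "norm (u y * f y) \<le> norm (B * u y)"
      by (simp add: abs_mult mult.commute)
  qed
  then show ?thesis
    by (rule summable_on_iff_abs_summable_on_real[THEN iffD2])
qed

lemma has_sum_pmf_expectation:
  fixes f :: "'a \<Rightarrow> real"
  assumes "bounded (range f)"
  shows "((\<lambda>y. pmf p y * f y) has_sum measure_pmf.expectation p f) UNIV"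
proof -
  have "(\<lambda>y. pmf p y * f y) summable_on UNIV"
    using summable_on_mult_bounded[OF summable_on_pmf assms] .
  then have "Infinite_Sum.abs_summable_on (\<lambda>y. pmf p y * f y) UNIV"
    by (rule summable_on_iff_abs_summable_on_real[THEN iffD1])
  then have "infsetsum (\<lambda>y. pmf p y * f y) UNIV = infsum (\<lambda>y. pmf p y * f y) UNIV"
    by (intro infsetsum_infsum abs_summable_equivalent[THEN iffD1])
  then show ?thesis
    using \<open>(\<lambda>y. pmf p y * f y) summable_on UNIV\<close>
    by (simp add: pmf_expectation_eq_infsetsum has_sum_iff)
qed

lemma has_sum_pmf_combination:
  fixes D :: "'a \<Rightarrow> real"
  assumes "bounded (range D)"
  shows "((\<lambda>y. (a * pmf p y - b * pmf q y) * D y) has_sum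
           a * measure_pmf.expectation p D - b * measure_pmf.expectation q D) UNIV"
  using has_sum_add[OF has_sum_cmult_right[OF has_sum_pmf_expectation[OF assms], of a]
                       has_sum_cmult_right[OF has_sum_pmf_expectation[OF assms], of "- b"]]
  by (simp add: algebra_simps)

lemma integrable_pmf_bounded:
  fixes f :: "'a \<Rightarrow> real"
  assumes "bounded (range f)"
  shows "integrable (measure_pmf p) f"
proof -
  obtain B where "\<And>y. \<bar>f y\<bar> \<le> B"
    using assms by (auto simp: bounded_iff)
  then show ?thesis
    by (intro measure_pmf.integrable_const_bound[where B = B]) auto
qed

lemma abs_expectation_le:
  fixes f :: "'a \<Rightarrow> real"
  assumes "\<And>y. \<bar>f y\<bar> \<le> B"
  shows "\<bar>measure_pmf.expectation p f\<bar> \<le> B"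
proof -
  have integrable: "integrable (measure_pmf p) f"
    using assms by (intro measure_pmf.integrable_const_bound[where B = B]) auto
  have "- B \<le> f y" "f y \<le> B" for y
    using assms[of y] by linarith+
  then have "- B \<le> measure_pmf.expectation p f \<and> measure_pmf.expectation p f \<le> B"
    by (intro conjI measure_pmf.integral_ge_const[OF integrable] measure_pmf.integral_le_const[OF integrable] AE_I2)
  then show ?thesis
    by linarith
qed

lemma expectation_le_Sup:
  fixes f :: "'a \<Rightarrow> real"
  assumes "bounded (range f)"
  shows "measure_pmf.expectation p f \<le> (SUP y. f y)"
proof -
  have "f y \<le> (SUP y. f y)" for y
    using assms by (intro cSUP_upper bounded_imp_bdd_above) auto
  then show ?thesis
    by (intro measure_pmf.integral_le_const[OF integrable_pmf_bounded[OF assms]] AE_I2)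
qed

lemma bounded_subsolution_nonpos:
  fixes F :: "'a \<Rightarrow> real" and Q :: "'a \<Rightarrow> 'a pmf"
  assumes "0 \<le> k" "k < 1" "bounded (range F)"
    and sub: "\<And>x. F x \<le> k * measure_pmf.expectation (Q x) F"
  shows "F x \<le> 0"
proof -
  have "F y \<le> k * (SUP y. F y)" for y
    using sub[of y] mult_left_mono[OF expectation_le_Sup[OF assms(3), of "Q y"] \<open>0 \<le> k\<close>] by linarith
  then have "(SUP y. F y) \<le> k * (SUP y. F y)"
    by (intro cSUP_least) auto
  then have "(SUP y. F y) \<le> 0"
    using \<open>k < 1\<close> by (auto simp: mult_le_cancel_right1)
  moreover have "F x \<le> (SUP y. F y)"
    using assms(3) by (intro cSUP_upper bounded_imp_bdd_above) auto
  ultimately show ?thesis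
    by simp
qed

lemma has_sum_weighted_le_pos_part:
  fixes u D L U :: "'a \<Rightarrow> real"
  assumes sum: "((\<lambda>y. u y * D y) has_sum s) A" and u: "u summable_on A"
    and bounded: "bounded (L ` A)" "bounded (U ` A)"
    and between: "\<And>y. y \<in> A \<Longrightarrow> L y \<le> D y \<and> D y \<le> U y"
  shows "s \<le> infsum (\<lambda>y. pos_part (u y) * U y - pos_part (- u y) * L y) A"
proof -
  define W where "W y = (if 0 \<le> u y then U y else L y)" for y
  have W_eq: "pos_part (u y) * U y - pos_part (- u y) * L y = u y * W y" for y
    by (simp add: W_def pos_part_def)
  have "W ` A \<subseteq> U ` A \<union> L ` A"
    by (auto simp: W_def)
  then have "bounded (W ` A)"
    using bounded by (meson bounded_Un bounded_subset)
  then have "((\<lambda>y. u y * W y) has_sum infsum (\<lambda>y. u y * W y) A) A"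
    using summable_on_mult_bounded[OF u] by (simp add: has_sum_iff)
  moreover have "u y * D y \<le> u y * W y" if "y \<in> A" for y
    using between[OF that] by (cases "0 \<le> u y") (simp_all add: W_def mult_left_mono mult_left_mono_neg)
  ultimately show ?thesis
    unfolding W_eq by (rule has_sum_mono[OF sum])
qed

lemma state_dist_Suc_first:
  "state_dist P g (Suc t) x = bind_pmf (P (g x) x) (\<lambda>y. state_dist P g t y)"
proof (induction t)
  case 0
  show ?case by (simp add: bind_return_pmf bind_return_pmf')
next
  case (Suc t)
  have "state_dist P g (Suc (Suc t)) x = bind_pmf (state_dist P g (Suc t) x) (\<lambda>z. P (g z) z)"
    by simp
  also have "\<dots> = bind_pmf (P (g x) x) (\<lambda>y. state_dist P g (Suc t) y)"
    unfolding Suc by (simp add: bind_assoc_pmf)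
  finally show ?case .
qed

definition active_prob :: "(bool \<Rightarrow> 'x \<Rightarrow> 'x pmf) \<Rightarrow> ('x \<Rightarrow> bool) \<Rightarrow> nat \<Rightarrow> 'x \<Rightarrow> real" where
  "active_prob P g t x = measure_pmf.expectation (state_dist P g t x) (\<lambda>y. of_bool (g y))"

lemma active_prob_bounds: "0 \<le> active_prob P g t x \<and> active_prob P g t x \<le> 1"
  unfolding active_prob_def
  by (auto intro!: measure_pmf.integral_le_const measure_pmf.integrable_const_bound[where B = 1])

lemma active_prob_0: "active_prob P g 0 x = of_bool (g x)"
  by (simp add: active_prob_def)

lemma active_prob_Suc:
  "active_prob P g (Suc t) x = measure_pmf.expectation (P (g x) x) (active_prob P g t)"
  unfolding active_prob_def state_dist_Suc_first measure_pmf_bind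
  by (rule integral_bind[where K = "count_space UNIV" and B = 1 and B' = 1])
     (auto simp: measure_pmf.finite_measure measure_pmf_in_subprob_algebra)

locale discounted_kernel =
  fixes \<beta> :: real and P :: "bool \<Rightarrow> 'x \<Rightarrow> 'x pmf"
  assumes discount_pos: "0 < \<beta>" and discount_less_1: "\<beta> < 1"
begin

lemma summable_discounted_active_prob: "summable (\<lambda>t. \<beta> ^ t * active_prob P g t x)"
  by (rule summable_comparison_test'[where g = "\<lambda>t. \<beta> ^ t" and N = 0])
     (use active_prob_bounds[of P g] discount_pos discount_less_1
      in \<open>auto simp: abs_mult intro!: mult_left_le summable_geometric\<close>)

lemma occ_eq_suminf: "occ \<beta> P g x = (1 - \<beta>) * (\<Sum>t. \<beta> ^ t * active_prob P g t x)"
  by (simp add: occ_def active_prob_def)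

lemma occ_bounds: "0 \<le> occ \<beta> P g x \<and> occ \<beta> P g x \<le> 1"
proof -
  have "0 \<le> (\<Sum>t. \<beta> ^ t * active_prob P g t x)"
    using active_prob_bounds[of P g] discount_pos
    by (intro suminf_nonneg summable_discounted_active_prob) auto
  moreover have "(1 - \<beta>) * (\<Sum>t. \<beta> ^ t * active_prob P g t x) \<le> (1 - \<beta>) * (\<Sum>t. \<beta> ^ t)"
    using active_prob_bounds[of P g] discount_pos discount_less_1
    by (intro mult_left_mono suminf_le summable_discounted_active_prob summable_geometric)
       (auto intro: mult_left_le)
  moreover have "(1 - \<beta>) * (\<Sum>t. \<beta> ^ t) = 1"
    using discount_pos discount_less_1 by (simp add: suminf_geometric)
  ultimately show ?thesis
    unfolding occ_eq_suminf using discount_less_1 by simp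
qed

lemma bounded_occ: "bounded (range (occ \<beta> P g))"
  using occ_bounds by (intro boundedI[of _ 1]) auto

lemma occ_rec:
  "occ \<beta> P g x = (1 - \<beta>) * of_bool (g x) + \<beta> * measure_pmf.expectation (P (g x) x) (occ \<beta> P g)"
proof -
  let ?p = "P (g x) x"
  define f where "f t y = \<beta> ^ t * active_prob P g t y" for t y
  define S where "S y = (\<Sum>t. f t y)" for y
  have f_bounds: "0 \<le> f t y \<and> f t y \<le> \<beta> ^ t" for t y
    using active_prob_bounds[of P g t y] discount_pos by (auto simp: f_def intro: mult_left_le)
  have integrable: "integrable ?p (f t)" for t
    using f_bounds by (intro measure_pmf.integrable_const_bound[where B = "\<beta> ^ t"]) auto
  have integral_bound: "norm (measure_pmf.expectation ?p (\<lambda>y. norm (f t y))) \<le> \<beta> ^ t" for t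
  proof -
    have "measure_pmf.expectation ?p (\<lambda>y. norm (f t y)) = measure_pmf.expectation ?p (f t)"
      using f_bounds by (intro Bochner_Integration.integral_cong) auto
    moreover have "0 \<le> measure_pmf.expectation ?p (f t)"
      using f_bounds by (intro integral_nonneg_AE AE_I2) blast
    moreover have "measure_pmf.expectation ?p (f t) \<le> \<beta> ^ t"
      using f_bounds by (intro measure_pmf.integral_le_const[OF integrable] AE_I2) blast
    ultimately show ?thesis
      by simp
  qed
  have summable: "summable (\<lambda>t. f t y)" for y
    unfolding f_def by (rule summable_discounted_active_prob)
  have "(\<lambda>t. measure_pmf.expectation ?p (f t)) sums measure_pmf.expectation ?p S"
    unfolding S_def
  proof (rule sums_integral[OF integrable])
    show "AE y in ?p. summable (\<lambda>t. norm (f t y))"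
      using summable f_bounds by simp
    show "summable (\<lambda>t. measure_pmf.expectation ?p (\<lambda>y. norm (f t y)))"
      using discount_pos discount_less_1 integral_bound
      by (intro summable_comparison_test'[OF summable_geometric[of \<beta>]]) auto
  qed
  moreover have "f (Suc t) x = \<beta> * measure_pmf.expectation ?p (f t)" for t
    by (simp add: f_def[abs_def] active_prob_Suc)
  ultimately have "(\<lambda>t. f (Suc t) x) sums (\<beta> * measure_pmf.expectation ?p S)"
    by (simp add: sums_mult)
  then have "(\<lambda>t. f t x) sums (\<beta> * measure_pmf.expectation ?p S + f 0 x)"
    by (rule sums_Suc_iff[THEN iffD1])
  then have S_rec: "S x = \<beta> * measure_pmf.expectation ?p S + of_bool (g x)"
    unfolding S_def by (simp add: sums_unique[symmetric] f_def active_prob_0)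
  have occ_S: "occ \<beta> P g = (\<lambda>y. (1 - \<beta>) * S y)"
    by (simp add: fun_eq_iff occ_eq_suminf S_def f_def)
  have "occ \<beta> P g x = (1 - \<beta>) * of_bool (g x) + \<beta> * ((1 - \<beta>) * measure_pmf.expectation ?p S)"
    unfolding occ_S S_rec by (simp add: algebra_simps)
  also have "(1 - \<beta>) * measure_pmf.expectation ?p S = measure_pmf.expectation ?p (occ \<beta> P g)"
    by (simp add: occ_S)
  finally show ?thesis .
qed

end

lemma Hq_eq_expectation:
  assumes "bounded (range V)"
  shows "Hq \<beta> P c lam V x a = (1 - \<beta>) * clam c lam x a + \<beta> * measure_pmf.expectation (P a x) V"
  using has_sum_pmf_expectation[OF assms] by (simp add: Hq_def infsumI)

locale restless_bandit = discounted_kernel \<beta> P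
  for \<beta> :: real and P :: "bool \<Rightarrow> 'x \<Rightarrow> 'x pmf" +
  fixes c :: "'x \<Rightarrow> bool \<Rightarrow> real"
  assumes cost_bounded: "bounded (range (\<lambda>(x, a). c x a))"
begin

definition bellman :: "real \<Rightarrow> ('x \<Rightarrow> real) \<Rightarrow> 'x \<Rightarrow> real" where
  "bellman lam V x = min (Hq \<beta> P c lam V x False) (Hq \<beta> P c lam V x True)"

lemma bounded_bellman:
  assumes "bounded (range V)"
  shows "bounded (range (bellman lam V))"
proof -
  obtain C where C: "\<And>x a. \<bar>c x a\<bar> \<le> C"
    using cost_bounded by (auto simp: bounded_iff)
  obtain B where B: "\<And>y. \<bar>V y\<bar> \<le> B"
    using assms by (auto simp: bounded_iff)
  define K where "K = (1 - \<beta>) * (C + \<bar>lam\<bar>) + \<beta> * B"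
  have "\<bar>Hq \<beta> P c lam V x a\<bar> \<le> K" for x a
  proof -
    have "\<bar>clam c lam x a\<bar> \<le> C + \<bar>lam\<bar>"
      using C[of x a] by (cases a) (auto simp: clam_def)
    moreover have "\<bar>measure_pmf.expectation (P a x) V\<bar> \<le> B"
      using B by (rule abs_expectation_le)
    ultimately have "\<bar>(1 - \<beta>) * clam c lam x a\<bar> + \<bar>\<beta> * measure_pmf.expectation (P a x) V\<bar> \<le> K"
      unfolding K_def using discount_pos discount_less_1
      by (simp add: abs_mult add_mono mult_left_mono)
    then show ?thesis
      unfolding Hq_eq_expectation[OF assms] by (rule order_trans[OF abs_triangle_ineq])
  qed
  then show ?thesis
    unfolding bellman_def by (intro boundedI[of _ K]) (auto simp: min_def)
qed

lemma bellman_contraction: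
  assumes V: "bounded (range V)" and W: "bounded (range W)" and dist: "\<And>y. dist (V y) (W y) \<le> B"
  shows "dist (bellman lam V x) (bellman lam W x) \<le> \<beta> * B"
proof -
  have "\<bar>Hq \<beta> P c lam V x a - Hq \<beta> P c lam W x a\<bar> \<le> \<beta> * B" for a
  proof -
    have "Hq \<beta> P c lam V x a - Hq \<beta> P c lam W x a
        = \<beta> * measure_pmf.expectation (P a x) (\<lambda>y. V y - W y)"
      by (simp add: Hq_eq_expectation V W Bochner_Integration.integral_diff[OF integrable_pmf_bounded[OF V]
            integrable_pmf_bounded[OF W]] algebra_simps)
    moreover have "\<bar>measure_pmf.expectation (P a x) (\<lambda>y. V y - W y)\<bar> \<le> B"
      using dist by (intro abs_expectation_le) (simp add: dist_real_def)
    ultimately show ?thesis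
      using discount_pos by (simp add: abs_mult)
  qed
  from this[of False] this[of True] show ?thesis
    unfolding bellman_def dist_real_def min_def by (auto simp: abs_le_iff)
qed

lemma Vlam_fixpoint: "bounded (range (Vlam \<beta> P c lam)) \<and> bellman lam (Vlam \<beta> P c lam) = Vlam \<beta> P c lam"
proof -
  have "\<exists>!V. bounded (range V) \<and> bellman lam V = V"
    using discount_less_1 bounded_bellman bellman_contraction
    by (rule bounded_contraction_has_unique_fixpoint)
  then have "\<exists>!V. bounded (range V) \<and> (\<forall>x. V x = min (Hq \<beta> P c lam V x False) (Hq \<beta> P c lam V x True))"
    by (simp add: bellman_def fun_eq_iff eq_commute)
  from theI'[OF this] have "bounded (range (Vlam \<beta> P c lam))"
    "\<forall>x. Vlam \<beta> P c lam x = min (Hq \<beta> P c lam (Vlam \<beta> P c lam) x False) (Hq \<beta> P c lam (Vlam \<beta> P c lam) x True)"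
    unfolding Vlam_def[symmetric] by blast+
  then show ?thesis
    by (auto simp: bellman_def fun_eq_iff)
qed

abbreviation value_fn :: "real \<Rightarrow> 'x \<Rightarrow> real" where
  "value_fn lam \<equiv> Vlam \<beta> P c lam"

abbreviation Q :: "real \<Rightarrow> 'x \<Rightarrow> bool \<Rightarrow> real" where
  "Q lam x a \<equiv> Hq \<beta> P c lam (value_fn lam) x a"

definition opt_policy :: "real \<Rightarrow> 'x \<Rightarrow> bool" where
  "opt_policy lam x \<longleftrightarrow> \<not> Q lam x False < Q lam x True"

lemma bounded_value: "bounded (range (value_fn lam))"
  using Vlam_fixpoint by blast

lemma value_eq_min: "value_fn lam x = min (Q lam x False) (Q lam x True)"
  using Vlam_fixpoint[of lam] by (metis bellman_def)

lemma value_le_Q: "value_fn lam x \<le> Q lam x a"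
  by (cases a) (simp_all add: value_eq_min)

lemma value_eq_Q_opt_policy: "value_fn lam x = Q lam x (opt_policy lam x)"
  by (cases "Q lam x False < Q lam x True") (auto simp: value_eq_min opt_policy_def min_def)

lemma bounded_value_diff: "bounded (range (\<lambda>y. value_fn l2 y - value_fn l1 y))"
  by (intro bounded_minus_comp bounded_value)

lemma Q_diff:
  "Q l2 x a - Q l1 x a = (1 - \<beta>) * (l2 - l1) * of_bool a
     + \<beta> * measure_pmf.expectation (P a x) (\<lambda>y. value_fn l2 y - value_fn l1 y)"
  by (simp add: Hq_eq_expectation bounded_value clam_def algebra_simps
      Bochner_Integration.integral_diff[OF integrable_pmf_bounded integrable_pmf_bounded, OF bounded_value bounded_value])

lemma value_diff_le:
  "value_fn l2 x - value_fn l1 x \<le> (1 - \<beta>) * (l2 - l1) * of_bool (opt_policy l1 x)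
     + \<beta> * measure_pmf.expectation (P (opt_policy l1 x) x) (\<lambda>y. value_fn l2 y - value_fn l1 y)"
  using value_le_Q[of l2 x "opt_policy l1 x"] value_eq_Q_opt_policy[of l1 x]
    Q_diff[of l2 x "opt_policy l1 x" l1]
  by linarith

lemma value_diff_le_occ:
  "value_fn l2 x - value_fn l1 x \<le> (l2 - l1) * occ \<beta> P (opt_policy l1) x"
proof -
  let ?g = "opt_policy l1"
  let ?D = "\<lambda>y. value_fn l2 y - value_fn l1 y"
  let ?N = "\<lambda>y. (l2 - l1) * occ \<beta> P ?g y"
  have bounded_N: "bounded (range ?N)"
    using bounded_scaleR_comp[OF bounded_occ, of "l2 - l1"] by simp
  have bounded_F: "bounded (range (\<lambda>y. ?D y - ?N y))"
    by (intro bounded_minus_comp bounded_value_diff bounded_N)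
  have "?D y - ?N y \<le> \<beta> * measure_pmf.expectation (P (?g y) y) (\<lambda>y. ?D y - ?N y)" for y
  proof -
    have "?N y = (1 - \<beta>) * (l2 - l1) * of_bool (?g y)
                 + \<beta> * ((l2 - l1) * measure_pmf.expectation (P (?g y) y) (occ \<beta> P ?g))"
      by (subst occ_rec) (simp add: algebra_simps)
    then have "?D y - ?N y \<le> \<beta> * measure_pmf.expectation (P (?g y) y) ?D
                              - \<beta> * ((l2 - l1) * measure_pmf.expectation (P (?g y) y) (occ \<beta> P ?g))"
      using value_diff_le[of l2 y l1] by linarith
    also have "\<dots> = \<beta> * measure_pmf.expectation (P (?g y) y) (\<lambda>y. ?D y - ?N y)"
      using integrable_pmf_bounded[OF bounded_value_diff] integrable_pmf_bounded[OF bounded_N]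
      by (simp add: right_diff_distrib)
    finally show ?thesis .
  qed
  then have "?D x - ?N x \<le> 0"
    using discount_pos discount_less_1 by (intro bounded_subsolution_nonpos[OF _ _ bounded_F]) auto
  then show ?thesis
    by simp
qed

lemma occ_le_value_diff:
  "(l2 - l1) * occ \<beta> P (opt_policy l2) x \<le> value_fn l2 x - value_fn l1 x"
  using value_diff_le_occ[of l1 x l2] by (simp add: algebra_simps)

lemma occ_opt_policy_antimono:
  assumes "l1 < l2"
  shows "occ \<beta> P (opt_policy l2) x \<le> occ \<beta> P (opt_policy l1) x"
proof -
  have "(l2 - l1) * occ \<beta> P (opt_policy l2) x \<le> (l2 - l1) * occ \<beta> P (opt_policy l1) x"
    using order_trans[OF occ_le_value_diff[of l2 l1 x] value_diff_le_occ[of l2 x l1]] .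
  then show ?thesis
    using assms by (simp add: mult_le_cancel_left_pos)
qed

lemma expectation_value_diff_le:
  assumes "l1 \<le> l2"
    and "infsum (\<lambda>y. pos_part (a * pmf p y - b * pmf q y) * occ \<beta> P (opt_policy l1) y
                    - pos_part (b * pmf q y - a * pmf p y) * occ \<beta> P (opt_policy l2) y) UNIV \<le> K"
  shows "a * measure_pmf.expectation p (\<lambda>y. value_fn l2 y - value_fn l1 y)
           - b * measure_pmf.expectation q (\<lambda>y. value_fn l2 y - value_fn l1 y) \<le> (l2 - l1) * K"
proof -
  let ?u = "\<lambda>y. a * pmf p y - b * pmf q y"
  let ?N = "\<lambda>l y. (l2 - l1) * occ \<beta> P (opt_policy l) y"
  have "?u summable_on UNIV"
    using has_sum_pmf_combination[of "\<lambda>_. 1" a p b q] by (auto simp: summable_on_def)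
  moreover have "bounded (range (?N l))" for l
    using bounded_scaleR_comp[OF bounded_occ, of "l2 - l1"] by simp
  ultimately have "a * measure_pmf.expectation p (\<lambda>y. value_fn l2 y - value_fn l1 y)
     - b * measure_pmf.expectation q (\<lambda>y. value_fn l2 y - value_fn l1 y)
     \<le> infsum (\<lambda>y. pos_part (?u y) * ?N l1 y - pos_part (- ?u y) * ?N l2 y) UNIV"
    using occ_le_value_diff value_diff_le_occ
    by (intro has_sum_weighted_le_pos_part[OF has_sum_pmf_combination[OF bounded_value_diff]]) auto
  also have "\<dots> = (l2 - l1) * infsum (\<lambda>y. pos_part (a * pmf p y - b * pmf q y) * occ \<beta> P (opt_policy l1) y
                          - pos_part (b * pmf q y - a * pmf p y) * occ \<beta> P (opt_policy l2) y) UNIV"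
    by (simp add: infsum_cmult_right'[symmetric] algebra_simps)
  also have "\<dots> \<le> (l2 - l1) * K"
    using assms by (intro mult_left_mono) auto
  finally show ?thesis .
qed

lemma passive_set_iff: "x \<in> passive_set \<beta> P c lam \<longleftrightarrow> \<not> opt_policy lam x"
  by (simp add: passive_set_def opt_policy_def)

lemma passive_set_mono_b:
  assumes "l1 \<le> l2"
    and cond: "\<And>x. infsum (\<lambda>y. pos_part (pmf (P False x) y - pmf (P True x) y) * occ \<beta> P (opt_policy l1) y
                  - pos_part (pmf (P True x) y - pmf (P False x) y) * occ \<beta> P (opt_policy l2) y) UNIV
                \<le> (1 - \<beta>) / \<beta>"
  shows "passive_set \<beta> P c l1 \<subseteq> passive_set \<beta> P c l2"
proof
  fix x assume x: "x \<in> passive_set \<beta> P c l1"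
  let ?E = "\<lambda>a. measure_pmf.expectation (P a x) (\<lambda>y. value_fn l2 y - value_fn l1 y)"
  have "?E False - ?E True \<le> (l2 - l1) * (1 - \<beta>) / \<beta>"
    using expectation_value_diff_le[OF assms(1), of 1 "P False x" 1 "P True x" "(1 - \<beta>) / \<beta>"] cond[of x] by simp
  then have "(?E False - ?E True) * \<beta> \<le> (l2 - l1) * (1 - \<beta>)"
    using pos_le_divide_eq[OF discount_pos] by blast
  then have "\<beta> * ?E False - \<beta> * ?E True \<le> (1 - \<beta>) * (l2 - l1)"
    by (simp add: algebra_simps)
  then show "x \<in> passive_set \<beta> P c l2"
    using x Q_diff[of l2 x True l1] Q_diff[of l2 x False l1] unfolding passive_set_def by simp
qed

lemma SUP_value_diff_le:
  assumes "l1 \<le> l2"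
    and cond: "\<And>z. infsum (\<lambda>y. pos_part (\<beta> * pmf (P True z) y - pmf (P True x) y) * occ \<beta> P (opt_policy l1) y
                  - pos_part (pmf (P True x) y - \<beta> * pmf (P True z) y) * occ \<beta> P (opt_policy l2) y) UNIV
                \<le> (1 - \<beta>)\<^sup>2 / \<beta>"
  shows "\<beta> * (SUP y. value_fn l2 y - value_fn l1 y)
           \<le> (1 - \<beta>) * (l2 - l1) + \<beta> * measure_pmf.expectation (P True x) (\<lambda>y. value_fn l2 y - value_fn l1 y)"
    (is "\<beta> * ?M \<le> ?A x")
proof -
  let ?D = "\<lambda>y. value_fn l2 y - value_fn l1 y"
  have D_nonneg: "0 \<le> ?D y" for y
  proof -
    have "0 \<le> (l2 - l1) * occ \<beta> P (opt_policy l2) y"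
      using occ_bounds assms(1) by simp
    then show ?thesis
      using occ_le_value_diff[of l2 l1 y] by linarith
  qed
  have A_nonneg: "0 \<le> ?A y" for y
    using D_nonneg assms(1) discount_pos discount_less_1 by (simp add: integral_nonneg_AE)
  have A_contraction: "\<beta> * ?A z \<le> ?A x" for z
  proof -
    have "\<beta> * measure_pmf.expectation (P True z) ?D - measure_pmf.expectation (P True x) ?D
          \<le> (l2 - l1) * ((1 - \<beta>)\<^sup>2 / \<beta>)"
      using expectation_value_diff_le[OF assms(1), of \<beta> "P True z" 1 "P True x" "(1 - \<beta>)\<^sup>2 / \<beta>"] cond[of z] by simp
    then have "\<beta> * (\<beta> * measure_pmf.expectation (P True z) ?D - measure_pmf.expectation (P True x) ?D)
          \<le> \<beta> * ((l2 - l1) * ((1 - \<beta>)\<^sup>2 / \<beta>))"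
      by (rule mult_left_mono) (use discount_pos in simp)
    also have "\<dots> = (1 - \<beta>)\<^sup>2 * (l2 - l1)"
      using discount_pos by simp
    finally show ?thesis
      by (simp add: algebra_simps power2_eq_square)
  qed
  have D_le_max: "?D z \<le> max (\<beta> * ?M) (?A x / \<beta>)" for z
  proof (cases "opt_policy l1 z")
    case True
    then have "?D z \<le> ?A z"
      using value_diff_le[of l2 z l1] by simp
    also have "\<dots> \<le> ?A x / \<beta>"
      using A_contraction[of z] discount_pos by (simp add: pos_le_divide_eq mult.commute)
    finally show ?thesis
      by simp
  next
    case False
    then have "?D z \<le> \<beta> * measure_pmf.expectation (P False z) ?D"
      using value_diff_le[of l2 z l1] by simp
    also have "\<dots> \<le> \<beta> * ?M"
      using discount_pos by (intro mult_left_mono expectation_le_Sup bounded_value_diff) simp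
    finally show ?thesis
      by simp
  qed
  then have "?M \<le> \<beta> * ?M \<or> ?M \<le> ?A x / \<beta>"
    unfolding le_max_iff_disj[symmetric] by (intro cSUP_least) auto
  then show ?thesis
  proof
    assume "?M \<le> \<beta> * ?M"
    then have "?M \<le> 0"
      using discount_less_1 by (auto simp: mult_le_cancel_right1)
    then have "\<beta> * ?M \<le> 0"
      using discount_pos by (simp add: mult_nonneg_nonpos)
    then show ?thesis
      using A_nonneg[of x] by linarith
  next
    assume "?M \<le> ?A x / \<beta>"
    then show ?thesis
      using discount_pos by (simp add: pos_le_divide_eq mult.commute)
  qed
qed

lemma passive_set_mono_a:
  assumes "l1 \<le> l2"
    and cond: "\<And>x z. infsum (\<lambda>y. pos_part (\<beta> * pmf (P True z) y - pmf (P True x) y) * occ \<beta> P (opt_policy l1) y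
                  - pos_part (pmf (P True x) y - \<beta> * pmf (P True z) y) * occ \<beta> P (opt_policy l2) y) UNIV
                \<le> (1 - \<beta>)\<^sup>2 / \<beta>"
  shows "passive_set \<beta> P c l1 \<subseteq> passive_set \<beta> P c l2"
proof
  fix x assume x: "x \<in> passive_set \<beta> P c l1"
  let ?D = "\<lambda>y. value_fn l2 y - value_fn l1 y"
  show "x \<in> passive_set \<beta> P c l2"
  proof (rule ccontr)
    assume "x \<notin> passive_set \<beta> P c l2"
    then have "?D x = Q l2 x True - Q l1 x False"
      using x value_eq_Q_opt_policy[of l2 x] value_eq_Q_opt_policy[of l1 x] by (simp add: passive_set_iff)
    then have "(1 - \<beta>) * (l2 - l1) + \<beta> * measure_pmf.expectation (P True x) ?D < ?D x"
      using x Q_diff[of l2 x True l1] unfolding passive_set_def by simp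
    also have "?D x \<le> \<beta> * measure_pmf.expectation (P False x) ?D"
      using x value_diff_le[of l2 x l1] by (simp add: passive_set_iff)
    also have "\<dots> \<le> \<beta> * (SUP y. ?D y)"
      using discount_pos by (intro mult_left_mono expectation_le_Sup bounded_value_diff) simp
    also have "\<dots> \<le> (1 - \<beta>) * (l2 - l1) + \<beta> * measure_pmf.expectation (P True x) ?D"
      using SUP_value_diff_le[OF assms(1) cond[of _ x]] .
    finally show False
      by simp
  qed
qed

end

theorem theorem1:
  fixes \<beta> :: real
    and P :: "bool \<Rightarrow> 'x::countable \<Rightarrow> 'x pmf"
    and c :: "'x \<Rightarrow> bool \<Rightarrow> real"
  assumes beta: "0 < \<beta>" "\<beta> < 1"
    and cost_bounded: "bounded (range (\<lambda>(x, a). c x a))"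
    and conds:
      "(\<forall>g h. (\<forall>x. occ \<beta> P g x \<ge> occ \<beta> P h x) \<longrightarrow>
          (\<forall>x z. infsum (\<lambda>y. pos_part (\<beta> * pmf (P True z) y - pmf (P True x) y) * occ \<beta> P g y
                            - pos_part (pmf (P True x) y - \<beta> * pmf (P True z) y) * occ \<beta> P h y) UNIV
                 \<le> (1 - \<beta>)\<^sup>2 / \<beta>))
       \<or>
       (\<forall>g h. (\<forall>x. occ \<beta> P g x \<ge> occ \<beta> P h x) \<longrightarrow>
          (\<forall>x. infsum (\<lambda>y. pos_part (pmf (P False x) y - pmf (P True x) y) * occ \<beta> P g y
                          - pos_part (pmf (P True x) y - pmf (P False x) y) * occ \<beta> P h y) UNIV
                 \<le> (1 - \<beta>) / \<beta>))"
  shows "indexable \<beta> P c"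
proof -
  interpret restless_bandit \<beta> P c
    using beta cost_bounded by unfold_locales auto
  show ?thesis
    unfolding indexable_def
  proof (intro allI impI)
    fix l1 l2 :: real
    assume le: "l1 \<le> l2"
    show "passive_set \<beta> P c l1 \<subseteq> passive_set \<beta> P c l2"
    proof (cases "l1 = l2")
      case False
      with le have "\<forall>x. occ \<beta> P (opt_policy l1) x \<ge> occ \<beta> P (opt_policy l2) x"
        using occ_opt_policy_antimono by simp
      then show ?thesis
        using conds passive_set_mono_a[OF le] passive_set_mono_b[OF le] by blast
    qed simp
  qed
qed

end
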